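(* Let $\{S_{\mathbf a^{*[k]}},\,k\ge0\}$ be a local, bounded (i.e. $\sup_k\|S_{\mathbf a^{*[k]}}\|<\infty$) subdivision scheme that reproduces constants and satisfies Condition A. Then every local subdivision scheme $\{S_{\mathbf a^{[k]}},\,k\ge0\}$ that reproduces constants and is asymptotically similar to $\{S_{\mathbf a^{*[k]}},\,k\ge0\}$ (i.e. $\lim_{k\to\infty}\|\mathbf a^{[k]}-\mathbf a^{*[k]}\|=0$) also satisfies Condition A.
   Context: A subdivision scheme $\{S_{\mathbf a^{[k]}},\,k\ge0\}$ is given by finitely supported masks $\mathbf a^{[k]}=\{a^{[k]}_i\}_{i\in\mathbb Z}$ and operators $(S_{\mathbf a^{[k]}}\mathbf f)_i=\sum_{j\in\mathbb Z}a^{[k]}_{i-2j}f_j$ on $\mathbf f\in\mathbb R^{\mathbb Z}$. Local means: there is a positive integer $N$ with all masks supported in $[-N,N]$. Norms are sup-norms: $\|\mathbf a\|=\sup_i|a_i|$, and $\|S_{\mathbf a}\|=\max(\sum_i|a_{2i}|,\sum_i|a_{2i+1}|)$ (operator sup-norm). The scheme reproduces constants if $\sum_ia^{[k]}_{2i}=\sum_ia^{[k]}_{2i+1}=1$ for all $k$; then its difference scheme $\{S_{\mathbf q^{[k]}}\}$ has masks $q^{[k]}_i=\sum_{j\le i}(-1)^{i-j}a^{[k]}_j$. A scheme reproducing constants satisfies Condition A if there exist integers $K\ge0$, $n>0$ with $\sup_{k\ge K}\|S_{\mathbf q^{[k+n-1]}}\cdots S_{\mathbf q^{[k+1]}}S_{\mathbf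 q^{[k]}}\|<1$. *)

theory Defs
  imports "HOL-Analysis.Analysis"
begin

type_synonym mask = "int \<Rightarrow> real"
type_synonym seq = "int \<Rightarrow> real"

definition sub_op :: "mask \<Rightarrow> seq \<Rightarrow> seq" where
  "sub_op a f i = (\<Sum>j \<in> {j. a (i - 2*j) \<noteq> 0}. a (i - 2*j) * f j)"

definition local_scheme :: "(nat \<Rightarrow> mask) \<Rightarrow> bool" where
  "local_scheme a \<longleftrightarrow> (\<exists>N::int. N > 0 \<and> (\<forall>k i. \<bar>i\<bar> > N \<longrightarrow> a k i = 0))"

definition mask_norm :: "mask \<Rightarrow> real" where
  "mask_norm a = (SUP i. \<bar>a i\<bar>)"

text \<open>Norm of S_a: max of sums of absolute values of even / odd entries.\<close>
definition sub_norm :: "mask \<Rightarrow> real" where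
  "sub_norm a = max (\<Sum>i \<in> {i. a (2*i) \<noteq> 0}. \<bar>a (2*i)\<bar>)
                    (\<Sum>i \<in> {i. a (2*i+1) \<noteq> 0}. \<bar>a (2*i+1)\<bar>)"

definition op_norm :: "(seq \<Rightarrow> seq) \<Rightarrow> ereal" where
  "op_norm T = (SUP f \<in> {f. \<forall>j. \<bar>f j\<bar> \<le> 1}. SUP i. ereal \<bar>T f i\<bar>)"

definition reproduces_constants :: "(nat \<Rightarrow> mask) \<Rightarrow> bool" where
  "reproduces_constants a \<longleftrightarrow>
     (\<forall>k. (\<Sum>i \<in> {i. a k (2*i) \<noteq> 0}. a k (2*i)) = 1 \<and>
          (\<Sum>i \<in> {i. a k (2*i+1) \<noteq> 0}. a k (2*i+1)) = 1)"

definition diff_mask :: "mask \<Rightarrow> mask" where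
  "diff_mask a i = (\<Sum>j \<in> {j. j \<le> i \<and> a j \<noteq> 0}. (-1) ^ nat (i - j) * a j)"

fun sub_comp :: "(nat \<Rightarrow> mask) \<Rightarrow> nat \<Rightarrow> nat \<Rightarrow> seq \<Rightarrow> seq" where
  "sub_comp q k 0 = id"
| "sub_comp q k (Suc n) = sub_op (q (k + n)) \<circ> sub_comp q k n"

definition condition_A :: "(nat \<Rightarrow> mask) \<Rightarrow> bool" where
  "condition_A a \<longleftrightarrow> (\<exists>K n::nat. n > 0 \<and>
      (SUP k \<in> {K..}. op_norm (sub_comp (\<lambda>k. diff_mask (a k)) k n)) < 1)"

end

theory Submission
  imports Defs
begin

text \<open>
  For a local scheme reproducing constants, the difference masks are supported in the same
  window [-M, M] as the masks and depend linearly on them with Lipschitz constant 2M+1. Hence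
  the difference masks of a scheme asymptotically similar to a bounded one are eventually
  uniformly bounded and uniformly close to those of the reference scheme. A telescoping
  estimate shows that an n-fold composite of subdivision operators moves by at most
  n C^n (2M+1) e when every mask moves by at most e, so the strict contraction bound of
  Condition A survives for all large levels.
\<close>

definition supported_in :: "mask \<Rightarrow> int \<Rightarrow> bool" where
  "supported_in a M \<longleftrightarrow> (\<forall>i. M < \<bar>i\<bar> \<longrightarrow> a i = 0)"

lemma supported_in_range: "supported_in a M \<Longrightarrow> a j \<noteq> 0 \<Longrightarrow> j \<in> {-M..M}"
  unfolding supported_in_def by (metis abs_le_iff atLeastAtMost_iff minus_le_iff not_less)

lemma finite_nonzero_supported: "supported_in a M \<Longrightarrow> finite {j. a j \<noteq> 0}"
  by (rule finite_subset[of _ "{-M..M}"]) (auto dest: supported_in_range)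

subsection \<open>Subdivision operators with masks supported in a window\<close>

definition window :: "int \<Rightarrow> int \<Rightarrow> int set" where
  "window M i = {j. \<bar>i - 2*j\<bar> \<le> M}"

lemma finite_window: "finite (window M i)"
proof -
  have "window M i \<subseteq> (\<lambda>m. (i - m) div 2) ` {-M..M}"
  proof
    fix j assume "j \<in> window M i"
    then have "i - 2*j \<in> {-M..M}" "j = (i - (i - 2*j)) div 2" by (auto simp: window_def)
    then show "j \<in> (\<lambda>m. (i - m) div 2) ` {-M..M}" by blast
  qed
  then show ?thesis by (rule finite_subset) auto
qed

lemma sub_op_eq_window_sum:
  assumes "supported_in q M"
  shows "sub_op q f i = (\<Sum>j\<in>window M i. q (i - 2*j) * f j)"
  unfolding sub_op_def
proof (rule sum.mono_neutral_left[OF finite_window])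
  show "{j. q (i - 2*j) \<noteq> 0} \<subseteq> window M i"
    using assms by (force simp: supported_in_def window_def)
qed auto

lemma abs_sub_op_le:
  assumes "M \<ge> 0" "supported_in q M" "\<forall>m. \<bar>q m\<bar> \<le> Qb" "\<forall>j. \<bar>f j\<bar> \<le> Fb"
  shows "\<bar>sub_op q f i\<bar> \<le> real_of_int (2*M+1) * Qb * Fb"
proof -
  have Fb: "Fb \<ge> 0" using assms(4) by (meson abs_ge_zero order_trans)
  have "(\<Sum>j\<in>window M i. \<bar>q (i - 2*j)\<bar>) = (\<Sum>m\<in>(\<lambda>j. i - 2*j) ` window M i. \<bar>q m\<bar>)"
    by (subst sum.reindex) (auto simp: inj_on_def)
  also have "\<dots> \<le> (\<Sum>m\<in>{-M..M}. \<bar>q m\<bar>)"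
    by (rule sum_mono2) (auto simp: window_def)
  also have "\<dots> \<le> (\<Sum>m\<in>{-M..M}. Qb)" by (rule sum_mono) (simp add: assms(3))
  finally have mask_sum: "(\<Sum>j\<in>window M i. \<bar>q (i - 2*j)\<bar>) \<le> real_of_int (2*M+1) * Qb"
    using assms(1) by simp
  have "\<bar>sub_op q f i\<bar> \<le> (\<Sum>j\<in>window M i. \<bar>q (i - 2*j) * f j\<bar>)"
    unfolding sub_op_eq_window_sum[OF assms(2)] by (rule sum_abs)
  also have "\<dots> \<le> (\<Sum>j\<in>window M i. \<bar>q (i - 2*j)\<bar> * Fb)"
    by (rule sum_mono) (simp add: abs_mult assms(4) mult_left_mono)
  also have "\<dots> = (\<Sum>j\<in>window M i. \<bar>q (i - 2*j)\<bar>) * Fb" by (simp add: sum_distrib_right)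
  also have "\<dots> \<le> real_of_int (2*M+1) * Qb * Fb" using mask_sum Fb by (rule mult_right_mono)
  finally show ?thesis .
qed

lemma sub_op_diff:
  assumes "supported_in q M" "supported_in q' M"
  shows "sub_op q f i - sub_op q' f' i = sub_op q (\<lambda>j. f j - f' j) i + sub_op (\<lambda>m. q m - q' m) f' i"
proof -
  have "supported_in (\<lambda>m. q m - q' m) M" using assms by (simp add: supported_in_def)
  then show ?thesis
    unfolding sub_op_eq_window_sum[OF assms(1)] sub_op_eq_window_sum[OF assms(2)]
      sub_op_eq_window_sum[OF \<open>supported_in (\<lambda>m. q m - q' m) M\<close>]
    by (simp add: sum_subtractf[symmetric] sum.distrib[symmetric] algebra_simps)
qed

lemma sub_comp_perturbation_bound:
  fixes q qs :: "nat \<Rightarrow> mask"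
  assumes M: "M \<ge> 0"
    and supp_q: "\<forall>t. supported_in (q t) M" and supp_qs: "\<forall>t. supported_in (qs t) M"
    and bound_q: "\<forall>t\<ge>k. \<forall>m. \<bar>q t m\<bar> \<le> Qb" and bound_qs: "\<forall>t\<ge>k. \<forall>m. \<bar>qs t m\<bar> \<le> Qb"
    and close: "\<forall>t\<ge>k. \<forall>m. \<bar>q t m - qs t m\<bar> \<le> e"
    and C: "C = real_of_int (2*M+1) * Qb" "C \<ge> 1" and e: "e \<ge> 0"
    and f: "\<forall>j. \<bar>f j\<bar> \<le> 1"
  shows "\<forall>i. \<bar>sub_comp qs k n f i\<bar> \<le> C^n \<and>
     \<bar>sub_comp q k n f i - sub_comp qs k n f i\<bar> \<le> real n * C^n * (real_of_int (2*M+1) * e)"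
proof (induction n)
  case 0
  then show ?case using f by simp
next
  case (Suc n)
  define W where "W = real_of_int (2*M+1)"
  have W: "W \<ge> 0" using M by (simp add: W_def)
  define g where "g = sub_comp q k n f"
  define gs where "gs = sub_comp qs k n f"
  have IH_bound: "\<forall>j. \<bar>gs j\<bar> \<le> C^n" and IH_diff: "\<forall>j. \<bar>g j - gs j\<bar> \<le> real n * C^n * (W * e)"
    using Suc by (auto simp: g_def gs_def W_def)
  have next_bound: "\<bar>sub_op (qs (k+n)) gs i\<bar> \<le> C^Suc n" for i
    using abs_sub_op_le[OF M, of "qs (k+n)" Qb gs "C^n" i] supp_qs bound_qs IH_bound C by auto
  have propagated: "\<bar>sub_op (q (k+n)) (\<lambda>j. g j - gs j) i\<bar> \<le> C * (real n * C^n * (W * e))" for i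
    using abs_sub_op_le[OF M, of "q (k+n)" Qb "\<lambda>j. g j - gs j" "real n * C^n * (W * e)" i]
      supp_q bound_q IH_diff C by (auto simp: W_def)
  have supp_diff: "supported_in (\<lambda>m. q (k+n) m - qs (k+n) m) M"
    using supp_q supp_qs by (simp add: supported_in_def)
  have "\<bar>sub_op (\<lambda>m. q (k+n) m - qs (k+n) m) gs i\<bar> \<le> W * e * C^n" for i
    using abs_sub_op_le[OF M supp_diff, of e gs "C^n" i] close IH_bound by (auto simp: W_def)
  moreover have "W * e * C^n \<le> W * e * C^Suc n"
    using C(2) W e by (simp add: mult_left_mono)
  ultimately have fresh: "\<bar>sub_op (\<lambda>m. q (k+n) m - qs (k+n) m) gs i\<bar> \<le> W * e * C^Suc n" for i
    by (meson order_trans)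
  show ?case
  proof
    fix i
    have "\<bar>sub_op (q (k+n)) g i - sub_op (qs (k+n)) gs i\<bar>
       \<le> C * (real n * C^n * (W * e)) + W * e * C^Suc n"
      unfolding sub_op_diff[OF supp_q[rule_format] supp_qs[rule_format]]
      using propagated[of i] fresh[of i] by linarith
    also have "\<dots> = real (Suc n) * C^Suc n * (W * e)" by (simp add: algebra_simps)
    finally show "\<bar>sub_comp qs k (Suc n) f i\<bar> \<le> C^Suc n \<and>
        \<bar>sub_comp q k (Suc n) f i - sub_comp qs k (Suc n) f i\<bar>
          \<le> real (Suc n) * C^Suc n * (real_of_int (2*M+1) * e)"
      using next_bound[of i] by (simp add: g_def gs_def W_def)
  qed
qed

lemma op_norm_le_add:
  assumes "\<forall>f. (\<forall>j. \<bar>f j\<bar> \<le> 1) \<longrightarrow> (\<forall>i. \<bar>T f i\<bar> \<le> \<bar>T' f i\<bar> + \<delta>)"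
  shows "op_norm T \<le> op_norm T' + ereal \<delta>"
proof -
  have "ereal \<bar>T f i\<bar> \<le> op_norm T' + ereal \<delta>" if f: "\<forall>j. \<bar>f j\<bar> \<le> 1" for f i
  proof -
    have "ereal \<bar>T' f i\<bar> \<le> op_norm T'" unfolding op_norm_def
      by (rule SUP_upper2[of f]) (use f in \<open>auto intro: SUP_upper\<close>)
    then have "ereal \<bar>T' f i\<bar> + ereal \<delta> \<le> op_norm T' + ereal \<delta>" by (rule add_right_mono)
    moreover have "ereal \<bar>T f i\<bar> \<le> ereal \<bar>T' f i\<bar> + ereal \<delta>" using assms f by auto
    ultimately show ?thesis by (rule order_trans[rotated])
  qed
  then show ?thesis unfolding op_norm_def[of T] by (auto intro!: SUP_least)
qed

lemma sub_comp_contraction_perturbation: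
  fixes q qs :: "nat \<Rightarrow> mask"
  assumes M: "M \<ge> 0"
    and supp_q: "\<forall>t. supported_in (q t) M" and supp_qs: "\<forall>t. supported_in (qs t) M"
    and bound_qs: "\<forall>t m. \<bar>qs t m\<bar> \<le> Qb"
    and close: "\<forall>e>0. \<exists>K. \<forall>t\<ge>K. \<forall>m. \<bar>q t m - qs t m\<bar> \<le> e"
    and contr: "(SUP k \<in> {K..}. op_norm (sub_comp qs k n)) < 1"
  shows "\<exists>K'. (SUP k \<in> {K'..}. op_norm (sub_comp q k n)) < 1"
proof -
  define c where "c = (SUP k \<in> {K..}. op_norm (sub_comp qs k n))"
  obtain r where r: "c < ereal r" "ereal r < 1" using contr ereal_dense2 unfolding c_def by blast
  define \<delta> where "\<delta> = (1 - r) / 2"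
  have \<delta>: "\<delta> > 0" "r + \<delta> < 1" using r(2) by (simp_all add: \<delta>_def field_simps)
  define W where "W = real_of_int (2*M+1)"
  have W: "W \<ge> 1" using M by (simp add: W_def)
  define C where "C = W * (max Qb 0 + 1)"
  have "1 * 1 \<le> W * (max Qb 0 + 1)" by (rule mult_mono) (use W in auto)
  then have C: "C \<ge> 1" by (simp add: C_def)
  define e where "e = min 1 (\<delta> / (real (Suc n) * C^n * W))"
  have e: "e > 0" "e \<le> 1" using \<delta> C W by (simp_all add: e_def)
  have e_small: "real n * C^n * (W * e) \<le> \<delta>"
  proof -
    have "real n * C^n * W * e \<le> real (Suc n) * C^n * W * e"
      using e C W by (intro mult_right_mono) auto
    also have "\<dots> \<le> real (Suc n) * C^n * W * (\<delta> / (real (Suc n) * C^n * W))"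
      using C W by (intro mult_left_mono) (simp_all add: e_def)
    also have "\<dots> = \<delta>" using C W by simp
    finally show ?thesis by (simp add: ac_simps)
  qed
  obtain K1 where K1: "\<forall>t\<ge>K1. \<forall>m. \<bar>q t m - qs t m\<bar> \<le> e" using close e by blast
  define K' where "K' = max K K1"
  have step: "op_norm (sub_comp q k n) \<le> op_norm (sub_comp qs k n) + ereal \<delta>" if "k \<ge> K'" for k
  proof (rule op_norm_le_add, intro allI impI)
    fix f :: seq and i assume f: "\<forall>j. \<bar>f j\<bar> \<le> 1"
    have close_k: "\<forall>t\<ge>k. \<forall>m. \<bar>q t m - qs t m\<bar> \<le> e" using K1 that by (simp add: K'_def)
    have "\<forall>t\<ge>k. \<forall>m. \<bar>q t m\<bar> \<le> max Qb 0 + 1"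
    proof (intro allI impI)
      fix t m assume "t \<ge> k"
      then show "\<bar>q t m\<bar> \<le> max Qb 0 + 1"
        using close_k[rule_format, of t m] bound_qs[rule_format, of t m] e(2)
          abs_triangle_ineq2[of "q t m" "qs t m"] max.cobounded1[of Qb 0] by linarith
    qed
    moreover have "\<forall>t\<ge>k. \<forall>m. \<bar>qs t m\<bar> \<le> max Qb 0 + 1"
      using bound_qs max.cobounded1[of Qb 0] by (meson add_increasing2 order_trans zero_le_one)
    ultimately have "\<bar>sub_comp q k n f i - sub_comp qs k n f i\<bar> \<le> real n * C^n * (W * e)"
      using sub_comp_perturbation_bound[OF M supp_q supp_qs _ _ close_k _ C _ f] e
      by (simp add: C_def W_def)
    then show "\<bar>sub_comp q k n f i\<bar> \<le> \<bar>sub_comp qs k n f i\<bar> + \<delta>" using e_small by linarith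
  qed
  have "(SUP k \<in> {K'..}. op_norm (sub_comp q k n)) \<le> c + ereal \<delta>"
  proof (rule SUP_least)
    fix k assume k: "k \<in> {K'..}"
    have "op_norm (sub_comp qs k n) \<le> c" unfolding c_def
      by (rule SUP_upper) (use k in \<open>simp add: K'_def\<close>)
    then show "op_norm (sub_comp q k n) \<le> c + ereal \<delta>"
      using step[of k] k add_right_mono order_trans by fastforce
  qed
  also have "\<dots> \<le> ereal r + ereal \<delta>" using r(1) by (intro add_right_mono) simp
  also have "\<dots> = ereal (r + \<delta>)" by simp
  also have "\<dots> < 1" using \<delta>(2) by simp
  finally show ?thesis by blast
qed

subsection \<open>Difference masks\<close>

lemma diff_mask_eq_window_sum:
  assumes "supported_in a M"
  shows "diff_mask a i = (\<Sum>j\<in>{-M..M}. if j \<le> i then (-1) ^ nat (i - j) * a j else 0)"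
proof -
  have "(\<Sum>j\<in>{-M..M}. if j \<le> i then (-1) ^ nat (i - j) * a j else 0)
      = (\<Sum>j\<in>{j\<in>{-M..M}. j \<le> i}. (-1) ^ nat (i - j) * a j)"
    by (rule sum.inter_filter[symmetric]) simp
  also have "\<dots> = (\<Sum>j\<in>{j. j \<le> i \<and> a j \<noteq> 0}. (-1) ^ nat (i - j) * a j)"
    by (rule sum.mono_neutral_right)
      (rule finite_subset[of _ "{-M..M}"], auto dest: supported_in_range[OF assms])
  finally show ?thesis unfolding diff_mask_def by simp
qed

lemma sum_nonzero_reindex_eq_window_sum:
  assumes "supported_in a M" "inj h"
  shows "(\<Sum>i\<in>{i. a (h i) \<noteq> 0}. a (h i)) = (\<Sum>j\<in>{-M..M}. if j \<in> range h then a j else 0)"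
proof -
  have "(\<Sum>i\<in>{i. a (h i) \<noteq> 0}. a (h i)) = (\<Sum>j\<in>h ` {i. a (h i) \<noteq> 0}. a j)"
    by (subst sum.reindex) (use assms(2) in \<open>auto simp: inj_on_def inj_def\<close>)
  also have "\<dots> = (\<Sum>j\<in>{j\<in>{-M..M}. j \<in> range h}. a j)"
    by (rule sum.mono_neutral_left)
      (rule finite_subset[of _ "{-M..M}"], auto dest: supported_in_range[OF assms(1)])
  also have "\<dots> = (\<Sum>j\<in>{-M..M}. if j \<in> range h then a j else 0)"
    by (rule sum.inter_filter) simp
  finally show ?thesis .
qed

text \<open>Right of the window, the alternating sum defining the difference mask equals
  \<open>\<plusminus>\<close>(even mask sum \<open>-\<close> odd mask sum), which vanishes because both sums are 1.\<close>
lemma supported_in_diff_mask: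
  assumes supp: "supported_in a M" and M: "M \<ge> 0"
    and even_sum: "(\<Sum>i \<in> {i. a (2*i) \<noteq> 0}. a (2*i)) = 1"
    and odd_sum: "(\<Sum>i \<in> {i. a (2*i+1) \<noteq> 0}. a (2*i+1)) = 1"
  shows "supported_in (diff_mask a) M"
  unfolding supported_in_def
proof (intro allI impI)
  fix i assume i: "M < \<bar>i\<bar>"
  show "diff_mask a i = 0"
  proof (cases "i < -M")
    case True
    then have "{j. j \<le> i \<and> a j \<noteq> 0} = {}" using supp by (force simp: supported_in_def)
    then show ?thesis unfolding diff_mask_def by simp
  next
    case False
    with i have "i > M" by auto
    have range_odd: "j \<in> range (\<lambda>i. 2*i+1) \<longleftrightarrow> odd j" for j :: int by (auto elim!: oddE)
    have E: "(\<Sum>j\<in>{-M..M}. if even j then a j else 0) = 1"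
      using sum_nonzero_reindex_eq_window_sum[OF supp, of "(*) 2"] even_sum
      by (simp add: inj_def image_iff flip: dvd_def)
    have O: "(\<Sum>j\<in>{-M..M}. if odd j then a j else 0) = 1"
      using sum_nonzero_reindex_eq_window_sum[OF supp, of "\<lambda>i. 2*i+1"] odd_sum
      by (simp add: inj_def range_odd)
    have "diff_mask a i = (\<Sum>j\<in>{-M..M}. (if even (i - j) then 1 else -1) * a j)"
      unfolding diff_mask_eq_window_sum[OF supp]
      by (rule sum.cong) (use \<open>i > M\<close> in \<open>auto simp: even_nat_iff\<close>)
    also have "\<dots> = (if even i then 1 else -1) *
        ((\<Sum>j\<in>{-M..M}. if even j then a j else 0) - (\<Sum>j\<in>{-M..M}. if odd j then a j else 0))"
      unfolding sum_subtractf[symmetric] sum_distrib_left by (rule sum.cong) auto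
    also have "\<dots> = 0" using E O by simp
    finally show ?thesis .
  qed
qed

lemma abs_diff_mask_diff_le:
  assumes "supported_in a M" "supported_in b M" "M \<ge> 0" "\<forall>j. \<bar>a j - b j\<bar> \<le> e"
  shows "\<bar>diff_mask a i - diff_mask b i\<bar> \<le> real_of_int (2*M+1) * e"
proof -
  have "diff_mask a i - diff_mask b i =
     (\<Sum>j\<in>{-M..M}. if j \<le> i then (-1) ^ nat (i - j) * (a j - b j) else 0)"
    unfolding diff_mask_eq_window_sum[OF assms(1)] diff_mask_eq_window_sum[OF assms(2)]
    by (simp add: sum_subtractf[symmetric], rule sum.cong) (auto simp: algebra_simps)
  also have "\<bar>\<dots>\<bar> \<le> (\<Sum>j\<in>{-M..M}. \<bar>if j \<le> i then (-1) ^ nat (i - j) * (a j - b j) else 0\<bar>)"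
    by (rule sum_abs)
  also have "\<dots> \<le> (\<Sum>j\<in>{-M..M}. e)"
  proof (rule sum_mono)
    fix j
    have "e \<ge> 0" using assms(4) by (meson abs_ge_zero order_trans)
    then show "\<bar>if j \<le> i then (-1) ^ nat (i - j) * (a j - b j) else 0\<bar> \<le> e"
      using assms(4) by (auto simp: abs_mult power_abs)
  qed
  also have "\<dots> = real_of_int (2*M+1) * e" using assms(3) by simp
  finally show ?thesis .
qed

lemma abs_diff_mask_le:
  assumes "supported_in a M" "M \<ge> 0" "\<forall>j. \<bar>a j\<bar> \<le> B"
  shows "\<bar>diff_mask a i\<bar> \<le> real_of_int (2*M+1) * B"
  using abs_diff_mask_diff_le[OF assms(1), of "\<lambda>_. 0"] assms(2,3)
  by (simp add: supported_in_def diff_mask_def)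

subsection \<open>Mask norms\<close>

lemma abs_le_mask_norm:
  assumes "supported_in d M"
  shows "\<bar>d i\<bar> \<le> mask_norm d"
  unfolding mask_norm_def
proof (rule cSUP_upper)
  have "range (\<lambda>i. \<bar>d i\<bar>) \<subseteq> (\<lambda>i. \<bar>d i\<bar>) ` {-M..M} \<union> {0}"
    using assms by (force simp: supported_in_def)
  then show "bdd_above (range (\<lambda>i. \<bar>d i\<bar>))"
    by (rule bdd_above_mono[rotated]) (intro bdd_above_finite, simp)
qed simp

lemma abs_le_sub_norm:
  assumes "supported_in a M"
  shows "\<bar>a i\<bar> \<le> sub_norm a"
proof -
  have entry_le_sum: "\<bar>a (2*p + r)\<bar> \<le> (\<Sum>j \<in> {j. a (2*j + r) \<noteq> 0}. \<bar>a (2*j + r)\<bar>)" for p r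
  proof (cases "a (2*p + r) = 0")
    case False
    have "finite {j. a (2*j + r) \<noteq> 0}"
      using finite_vimageI[OF finite_nonzero_supported[OF assms], of "\<lambda>j. 2*j + r"]
      by (simp add: inj_def vimage_def)
    then show ?thesis using False by (intro member_le_sum) auto
  qed (simp add: sum_nonneg)
  show ?thesis
  proof (cases "even i")
    case True
    then obtain p where "i = 2*p + 0" by auto
    then show ?thesis using entry_le_sum[of p 0] unfolding sub_norm_def by simp
  next
    case False
    then obtain p where "i = 2*p + 1" by (blast elim: oddE)
    then show ?thesis using entry_le_sum[of p 1] unfolding sub_norm_def by simp
  qed
qed

lemma diff_mask_uniform_convergence:
  assumes M: "M \<ge> 0" and supp_a: "\<forall>k. supported_in (a k) M" and supp_b: "\<forall>k. supported_in (b k) M"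
    and lim: "(\<lambda>k. mask_norm (\<lambda>i. a k i - b k i)) \<longlonglongrightarrow> 0"
  shows "\<forall>e>0. \<exists>K. \<forall>t\<ge>K. \<forall>m. \<bar>diff_mask (a t) m - diff_mask (b t) m\<bar> \<le> e"
proof (intro allI impI)
  fix e :: real assume e: "e > 0"
  define W where "W = real_of_int (2*M+1)"
  have W: "W > 0" using M by (simp add: W_def)
  obtain K where K: "\<forall>t\<ge>K. \<bar>mask_norm (\<lambda>i. a t i - b t i)\<bar> < e / W"
    using lim e W unfolding LIMSEQ_iff by (metis divide_pos_pos real_norm_def diff_zero)
  have "\<bar>diff_mask (a t) m - diff_mask (b t) m\<bar> \<le> e" if "t \<ge> K" for t m
  proof -
    have "supported_in (\<lambda>i. a t i - b t i) M"
      using supp_a supp_b by (simp add: supported_in_def)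
    then have "\<forall>j. \<bar>a t j - b t j\<bar> \<le> e / W"
      using abs_le_mask_norm K that by (meson abs_ge_self less_imp_le order_trans)
    then have "\<bar>diff_mask (a t) m - diff_mask (b t) m\<bar> \<le> W * (e / W)"
      using abs_diff_mask_diff_le[OF supp_a[rule_format, of t] supp_b[rule_format, of t] M]
      unfolding W_def by blast
    then show ?thesis using W by simp
  qed
  then show "\<exists>K. \<forall>t\<ge>K. \<forall>m. \<bar>diff_mask (a t) m - diff_mask (b t) m\<bar> \<le> e" by blast
qed

theorem proposition9:
  fixes astar :: "nat \<Rightarrow> int \<Rightarrow> real"
  assumes "local_scheme astar"
    and "\<exists>B. \<forall>k. sub_norm (astar k) \<le> B"
    and "reproduces_constants astar"
    and "condition_A astar"
  shows "\<forall>a :: nat \<Rightarrow> int \<Rightarrow> real. local_scheme a \<and> reproduces_constants a \<and>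
           (\<lambda>k. mask_norm (\<lambda>i. a k i - astar k i)) \<longlonglongrightarrow> 0
           \<longrightarrow> condition_A a"
proof (intro allI impI)
  fix a :: "nat \<Rightarrow> int \<Rightarrow> real"
  assume H: "local_scheme a \<and> reproduces_constants a \<and>
           (\<lambda>k. mask_norm (\<lambda>i. a k i - astar k i)) \<longlonglongrightarrow> 0"
  obtain Na Ns where "Na > 0" "\<forall>k i. \<bar>i\<bar> > Na \<longrightarrow> a k i = 0"
      and "Ns > 0" "\<forall>k i. \<bar>i\<bar> > Ns \<longrightarrow> astar k i = 0"
    using H assms(1) unfolding local_scheme_def by blast
  then obtain M where M: "M \<ge> 0" and supp_a: "\<forall>k. supported_in (a k) M"
      and supp_s: "\<forall>k. supported_in (astar k) M"
    by (intro that[of "max Na Ns"]) (auto simp: supported_in_def)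
  obtain B where "\<forall>k. sub_norm (astar k) \<le> B" using assms(2) by blast
  then have "\<forall>k i. \<bar>astar k i\<bar> \<le> B" using abs_le_sub_norm supp_s order_trans by blast
  then have bound_qs: "\<forall>t m. \<bar>diff_mask (astar t) m\<bar> \<le> real_of_int (2*M+1) * B"
    using abs_diff_mask_le supp_s M by blast
  have "\<forall>t. supported_in (diff_mask (a t)) M" "\<forall>t. supported_in (diff_mask (astar t)) M"
    using supported_in_diff_mask supp_a supp_s M H assms(3)
    unfolding reproduces_constants_def by blast+
  moreover obtain K n where "n > 0"
      "(SUP k \<in> {K..}. op_norm (sub_comp (\<lambda>k. diff_mask (astar k)) k n)) < 1"
    using assms(4) unfolding condition_A_def by blast
  ultimately show "condition_A a" unfolding condition_A_def
    using sub_comp_contraction_perturbation[OF M _ _ bound_qs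
        diff_mask_uniform_convergence[OF M supp_a supp_s]] H by blast
qed

end
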